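(* Let $\ell$ be a linear space of real sequences endowed with a norm, quasi-norm or $\alpha$-norm, such that $\ell\hookrightarrow\ell^\infty$, and let $I\colon\ell\to\ell^\infty$ be the embedding operator. Suppose $$\|I\|\le\sigma_\ell<2\|I\|,$$ where $\sigma_\ell:=\sup_{y\in B_\ell}\big(\sup_{n\in\mathbb{N}}y_n-\inf_{n\in\mathbb{N}}y_n\big)$ is the span of $\ell$. Then $I$ is not maximally non-compact; moreover $\alpha(I)\le\sigma_\ell/2$.
   Context: $B_\ell$ is the closed unit ball of $\ell$; $\ell^\infty$ is the space of bounded sequences with the sup norm. $\ell\hookrightarrow\ell^\infty$ means $\ell\subset\ell^\infty$ as a linear subspace with $\|a\|_\infty\le C\|a\|_\ell$ for some constant $C$; $\|I\|=\sup_{y\in B_\ell}\|y\|_\infty$. For a bounded map $T\colon X\to Y$, the ball measure of non-compactness is $\alpha(T)=\inf\{r>0:\ T(B_X)\subset\bigcup_{i=1}^m (y_i+rB_Y)\text{ for some } m\in\mathbb{N},\ y_i\in Y\}$; $T$ is maximally non-compact if $\alpha(T)=\|T\|$. *)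

theory Defs
  imports "HOL-Analysis.Analysis"
begin

type_synonym rseq = "nat \<Rightarrow> real"

definition seq_subspace :: "rseq set \<Rightarrow> bool" where
  "seq_subspace L \<longleftrightarrow> (\<lambda>n. 0) \<in> L \<and> (\<forall>x\<in>L. \<forall>y\<in>L. (\<lambda>n. x n + y n) \<in> L) \<and> (\<forall>c. \<forall>x\<in>L. (\<lambda>n. c * x n) \<in> L)"

definition is_norm_on :: "rseq set \<Rightarrow> (rseq \<Rightarrow> real) \<Rightarrow> bool" where
  "is_norm_on L N \<longleftrightarrow>
     (\<forall>x\<in>L. N x \<ge> 0 \<and> (N x = 0 \<longleftrightarrow> x = (\<lambda>n. 0))) \<and>
     (\<forall>c. \<forall>x\<in>L. N (\<lambda>n. c * x n) = \<bar>c\<bar> * N x) \<and>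
     (\<forall>x\<in>L. \<forall>y\<in>L. N (\<lambda>n. x n + y n) \<le> N x + N y)"

definition is_quasinorm_on :: "rseq set \<Rightarrow> (rseq \<Rightarrow> real) \<Rightarrow> bool" where
  "is_quasinorm_on L N \<longleftrightarrow>
     (\<forall>x\<in>L. N x \<ge> 0 \<and> (N x = 0 \<longleftrightarrow> x = (\<lambda>n. 0))) \<and>
     (\<forall>c. \<forall>x\<in>L. N (\<lambda>n. c * x n) = \<bar>c\<bar> * N x) \<and>
     (\<exists>K\<ge>1. \<forall>x\<in>L. \<forall>y\<in>L. N (\<lambda>n. x n + y n) \<le> K * (N x + N y))"

definition is_alpha_norm_on :: "real \<Rightarrow> rseq set \<Rightarrow> (rseq \<Rightarrow> real) \<Rightarrow> bool" where
  "is_alpha_norm_on a L N \<longleftrightarrow> 0 < a \<and> a \<le> 1 \<and>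
     (\<forall>x\<in>L. N x \<ge> 0 \<and> (N x = 0 \<longleftrightarrow> x = (\<lambda>n. 0))) \<and>
     (\<forall>c. \<forall>x\<in>L. N (\<lambda>n. c * x n) = \<bar>c\<bar> powr a * N x) \<and>
     (\<forall>x\<in>L. \<forall>y\<in>L. N (\<lambda>n. x n + y n) \<le> N x + N y)"

definition bseq :: "rseq \<Rightarrow> bool" where
  "bseq x \<longleftrightarrow> bdd_above (range (\<lambda>n. \<bar>x n\<bar>))"

definition linf_norm :: "rseq \<Rightarrow> real" where
  "linf_norm x = (SUP n. \<bar>x n\<bar>)"

definition embeds_linf :: "rseq set \<Rightarrow> (rseq \<Rightarrow> real) \<Rightarrow> bool" where
  "embeds_linf L N \<longleftrightarrow> (\<exists>C. \<forall>x\<in>L. bseq x \<and> linf_norm x \<le> C * N x)"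

definition unit_ball :: "rseq set \<Rightarrow> (rseq \<Rightarrow> real) \<Rightarrow> rseq set" where
  "unit_ball L N = {y \<in> L. N y \<le> 1}"

definition emb_norm :: "rseq set \<Rightarrow> (rseq \<Rightarrow> real) \<Rightarrow> real" where
  "emb_norm L N = (SUP y \<in> unit_ball L N. linf_norm y)"

definition span_seq :: "rseq set \<Rightarrow> (rseq \<Rightarrow> real) \<Rightarrow> real" where
  "span_seq L N = (SUP y \<in> unit_ball L N. (SUP n. y n) - (INF n. y n))"

text \<open>Ball measure of non-compactness of the embedding I: infimum of radii r > 0
  such that I(B_\<ell>) = B_\<ell> is covered by finitely many (m \<ge> 1) closed \<ell>^\<infinity>-balls of radius r.\<close>
definition alpha_emb :: "rseq set \<Rightarrow> (rseq \<Rightarrow> real) \<Rightarrow> real" where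
  "alpha_emb L N = Inf {r. r > 0 \<and> (\<exists>Y. finite Y \<and> Y \<noteq> {} \<and> (\<forall>z\<in>Y. bseq z) \<and>
       unit_ball L N \<subseteq> (\<Union>z\<in>Y. {y. bseq (\<lambda>n. y n - z n) \<and> linf_norm (\<lambda>n. y n - z n) \<le> r}))}"

definition maximally_noncompact_emb :: "rseq set \<Rightarrow> (rseq \<Rightarrow> real) \<Rightarrow> bool" where
  "maximally_noncompact_emb L N \<longleftrightarrow> alpha_emb L N = emb_norm L N"

end

theory Submission
  imports Defs
begin

text \<open>Every y in the unit ball has its values in the interval [inf y, sup y], whose length is
  at most \<sigma> and whose midpoint lies in [-\<parallel>I\<parallel>, \<parallel>I\<parallel>]. Covering [-\<parallel>I\<parallel>, \<parallel>I\<parallel>] by a finite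
  e-grid, the constant sequence at the grid point just below that midpoint is within
  \<sigma>/2 + e of y in the sup norm. Hence \<alpha>(I) \<le> \<sigma>/2, which is < \<parallel>I\<parallel> by assumption.\<close>

definition linf_cball :: "rseq \<Rightarrow> real \<Rightarrow> rseq set" where
  "linf_cball z r = {y. bseq (\<lambda>n. y n - z n) \<and> linf_norm (\<lambda>n. y n - z n) \<le> r}"

lemma alpha_emb_linf_cball:
  "alpha_emb L N = Inf {r. r > 0 \<and> (\<exists>Y. finite Y \<and> Y \<noteq> {} \<and> (\<forall>z\<in>Y. bseq z) \<and>
     unit_ball L N \<subseteq> (\<Union>z\<in>Y. linf_cball z r))}"
  unfolding alpha_emb_def linf_cball_def ..

lemma abs_le_linf_norm: "bseq y \<Longrightarrow> \<bar>y n\<bar> \<le> linf_norm y"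
  unfolding bseq_def linf_norm_def by (rule cSUP_upper) auto

lemma
  assumes "bseq y"
  shows bseq_bdd_above: "bdd_above (range y)"
    and bseq_bdd_below: "bdd_below (range y)"
    and bseq_SUP_le_linf_norm: "(SUP n. y n) \<le> linf_norm y"
    and bseq_INF_ge_linf_norm: "- linf_norm y \<le> (INF n. y n)"
proof -
  have bound: "y n \<le> linf_norm y" "- linf_norm y \<le> y n" for n
    using abs_le_linf_norm[OF assms, of n] by linarith+
  show "bdd_above (range y)" by (rule bdd_aboveI2[where M = "linf_norm y"]) (rule bound)
  show "bdd_below (range y)" by (rule bdd_belowI2[where m = "- linf_norm y"]) (rule bound)
  show "(SUP n. y n) \<le> linf_norm y" by (rule cSUP_least) (auto simp: bound)
  show "- linf_norm y \<le> (INF n. y n)" by (rule cINF_greatest) (auto simp: bound)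
qed

lemma bseq_linf_norm_leI:
  assumes "\<And>n. \<bar>x n\<bar> \<le> r"
  shows "bseq x" "linf_norm x \<le> r"
proof -
  show "bseq x" unfolding bseq_def bdd_above_def using assms by blast
  show "linf_norm x \<le> r" unfolding linf_norm_def by (rule cSUP_least) (auto simp: assms)
qed

lemma unit_ball_linf_bounded:
  assumes "embeds_linf L N" and "\<And>x. x \<in> L \<Longrightarrow> 0 \<le> N x"
  obtains D where "\<And>y. y \<in> unit_ball L N \<Longrightarrow> bseq y \<and> linf_norm y \<le> D"
proof -
  obtain C where C: "\<And>x. x \<in> L \<Longrightarrow> bseq x \<and> linf_norm x \<le> C * N x"
    using assms(1) unfolding embeds_linf_def by blast
  have "bseq y \<and> linf_norm y \<le> max C 0" if "y \<in> unit_ball L N" for y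
  proof -
    have y: "y \<in> L" "0 \<le> N y" "N y \<le> 1"
      using that assms(2) unfolding unit_ball_def by auto
    have "C * N y \<le> max C 0 * N y" using y by (simp add: mult_right_mono)
    also have "\<dots> \<le> max C 0" using y by (simp add: mult_left_le)
    finally show ?thesis using C[OF y(1)] by linarith
  qed
  then show thesis by (rule that)
qed

lemma linf_norm_le_emb_norm:
  assumes "\<And>y. y \<in> unit_ball L N \<Longrightarrow> bseq y \<and> linf_norm y \<le> D" and "y \<in> unit_ball L N"
  shows "linf_norm y \<le> emb_norm L N"
  unfolding emb_norm_def
  by (rule cSUP_upper[OF assms(2)]) (use assms(1) in \<open>auto intro: bdd_aboveI2[where M = D]\<close>)

lemma oscillation_le_span_seq:
  assumes "\<And>y. y \<in> unit_ball L N \<Longrightarrow> bseq y \<and> linf_norm y \<le> D" and "y \<in> unit_ball L N"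
  shows "(SUP n. y n) - (INF n. y n) \<le> span_seq L N"
proof -
  have osc_bound: "(SUP n. y n) - (INF n. y n) \<le> 2 * D" if "y \<in> unit_ball L N" for y
    using assms(1)[OF that] bseq_SUP_le_linf_norm bseq_INF_ge_linf_norm by fastforce
  have "bdd_above ((\<lambda>y. (SUP n. y n) - (INF n. y n)) ` unit_ball L N)"
    by (rule bdd_aboveI2) (rule osc_bound)
  then show ?thesis
    unfolding span_seq_def by (rule cSUP_upper[OF assms(2)])
qed

lemma grid_point_below:
  fixes M e c :: real
  assumes "0 < e" and "- M \<le> c" and "c \<le> M"
  obtains k :: nat where "k \<le> nat \<lceil>2 * M / e\<rceil>" and "- M + k * e \<le> c" and "c < - M + k * e + e"
proof
  define k where "k = nat \<lfloor>(c + M) / e\<rfloor>"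
  have "0 \<le> (c + M) / e" using assms by simp
  then have k: "real k \<le> (c + M) / e" "(c + M) / e < real k + 1"
    unfolding k_def by linarith+
  then show "- M + k * e \<le> c" "c < - M + k * e + e"
    using assms(1) by (simp_all add: field_simps)
  have "(c + M) / e \<le> 2 * M / e" using assms by (simp add: divide_right_mono)
  then show "k \<le> nat \<lceil>2 * M / e\<rceil>"
    unfolding k_def by (meson ceiling_mono floor_le_ceiling order_trans nat_mono)
qed

lemma finite_cover_by_constant_centres:
  assumes "0 < e"
    and bounded: "\<And>y. y \<in> B \<Longrightarrow> bseq y \<and> linf_norm y \<le> M"
    and oscillation: "\<And>y. y \<in> B \<Longrightarrow> (SUP n. y n) - (INF n. y n) \<le> \<sigma>"
  shows "\<exists>Y. finite Y \<and> Y \<noteq> {} \<and> (\<forall>z\<in>Y. bseq z) \<and> B \<subseteq> (\<Union>z\<in>Y. linf_cball z (\<sigma> / 2 + e))"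
proof (intro exI conjI)
  define Y where "Y = (\<lambda>k::nat. \<lambda>n::nat. - M + k * e) ` {0..nat \<lceil>2 * M / e\<rceil>}"
  show "finite Y" "Y \<noteq> {}" "\<forall>z\<in>Y. bseq z"
    unfolding Y_def bseq_def by auto
  show "B \<subseteq> (\<Union>z\<in>Y. linf_cball z (\<sigma> / 2 + e))"
  proof
    fix y assume "y \<in> B"
    define s i where "s = (SUP n. y n)" and "i = (INF n. y n)"
    have y: "bseq y" "linf_norm y \<le> M" "s - i \<le> \<sigma>"
      using bounded oscillation \<open>y \<in> B\<close> unfolding s_def i_def by auto
    have range: "i \<le> y n" "y n \<le> s" for n
      unfolding s_def i_def
      using cINF_lower[OF bseq_bdd_below[OF y(1)] UNIV_I] cSUP_upper[OF UNIV_I bseq_bdd_above[OF y(1)]]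
      by auto
    have "- M \<le> (s + i) / 2" "(s + i) / 2 \<le> M"
      using range[of 0] y bseq_SUP_le_linf_norm bseq_INF_ge_linf_norm
      unfolding s_def i_def by fastforce+
    with \<open>0 < e\<close> obtain k :: nat where k: "k \<le> nat \<lceil>2 * M / e\<rceil>"
      "- M + k * e \<le> (s + i) / 2" "(s + i) / 2 < - M + k * e + e"
      by (rule grid_point_below)
    have "\<bar>y n - (- M + k * e)\<bar> \<le> \<sigma> / 2 + e" for n
      using range[of n] y(3) k(2,3) by (simp add: abs_le_iff)
    from bseq_linf_norm_leI[of "\<lambda>n. y n - (- M + k * e)", OF this]
    have "y \<in> linf_cball (\<lambda>n. - M + k * e) (\<sigma> / 2 + e)"
      unfolding linf_cball_def by simp
    moreover have "(\<lambda>n. - M + k * e) \<in> Y" unfolding Y_def using k(1) by auto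
    ultimately show "y \<in> (\<Union>z\<in>Y. linf_cball z (\<sigma> / 2 + e))" by blast
  qed
qed

lemma alpha_emb_le_half_oscillation:
  assumes "0 \<le> \<sigma>"
    and "\<And>y. y \<in> unit_ball L N \<Longrightarrow> bseq y \<and> linf_norm y \<le> M"
    and "\<And>y. y \<in> unit_ball L N \<Longrightarrow> (SUP n. y n) - (INF n. y n) \<le> \<sigma>"
  shows "alpha_emb L N \<le> \<sigma> / 2"
proof (rule field_le_epsilon)
  fix e :: real assume "0 < e"
  then have "\<sigma> / 2 + e \<in> {r. r > 0 \<and> (\<exists>Y. finite Y \<and> Y \<noteq> {} \<and> (\<forall>z\<in>Y. bseq z) \<and>
      unit_ball L N \<subseteq> (\<Union>z\<in>Y. linf_cball z r))}"
    using finite_cover_by_constant_centres[OF _ assms(2,3)] \<open>0 \<le> \<sigma>\<close> by simp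
  then show "alpha_emb L N \<le> \<sigma> / 2 + e"
    unfolding alpha_emb_linf_cball by (rule cInf_lower) (auto intro: bdd_belowI[where m = 0])
qed

theorem mainTheorem3:
  fixes L :: "rseq set" and N :: "rseq \<Rightarrow> real"
  assumes "seq_subspace L"
    and "is_norm_on L N \<or> is_quasinorm_on L N \<or> (\<exists>a. is_alpha_norm_on a L N)"
    and "embeds_linf L N"
    and "emb_norm L N \<le> span_seq L N"
    and "span_seq L N < 2 * emb_norm L N"
  shows "\<not> maximally_noncompact_emb L N \<and> alpha_emb L N \<le> span_seq L N / 2"
proof -
  have N: "\<And>x. x \<in> L \<Longrightarrow> 0 \<le> N x \<and> (N x = 0 \<longleftrightarrow> x = (\<lambda>n. 0))"
    using assms(2) unfolding is_norm_on_def is_quasinorm_on_def is_alpha_norm_on_def by blast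
  have "(\<lambda>n. 0) \<in> L" using assms(1) unfolding seq_subspace_def by blast
  with N have zero: "(\<lambda>n. 0) \<in> unit_ball L N" unfolding unit_ball_def by force
  obtain D where D: "\<And>y. y \<in> unit_ball L N \<Longrightarrow> bseq y \<and> linf_norm y \<le> D"
    using unit_ball_linf_bounded[OF assms(3)] N by blast
  have "0 \<le> span_seq L N" using oscillation_le_span_seq[OF D zero] by simp
  then have "alpha_emb L N \<le> span_seq L N / 2"
    by (rule alpha_emb_le_half_oscillation[where M = "emb_norm L N"])
      (auto simp: D linf_norm_le_emb_norm[OF D] oscillation_le_span_seq[OF D])
  with assms(5) show ?thesis unfolding maximally_noncompact_emb_def by simp
qed

end
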